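(* Let $v_1,\dots,v_m\in\mathbb{C}^d$ with $m$ even, $\sum_{i=1}^m v_iv_i^*=\mathbb{I}$, $\|v_i\|^2=\alpha$ for all $i$, and $m\ge 49d^2$. Run Algorithm 2 (described in the context) on these vectors and let $A_{m/2}=\sum_{v\in\mathcal{A}_{m/2}}vv^*$ be the matrix corresponding to its output. Then \[ \log\det(\mathbb{I}-A_{m/2})\ge -d\log 2-\frac{2d^2}{m}. \]
   Context: Algorithm 2: set $A_0=\mathbf{0}_{d\times d}$, $\mathcal{A}_0=\emptyset$, $\mathcal{B}_0=\{v_1,\dots,v_m\}$. For $j=0,1,\dots,m/2-1$: choose $v_j\in\mathcal{B}_j$ minimising $v^*(\mathbb{I}-A_j)^{-1}v$ over $v\in\mathcal{B}_j$ (ties broken arbitrarily); set $A_{j+1}=A_j+v_jv_j^*$, $\mathcal{A}_{j+1}=\mathcal{A}_j\cup\{v_j\}$, $\mathcal{B}_{j+1}=\mathcal{B}_j\setminus\{v_j\}$. The output is $\mathcal{A}_{m/2}$. *)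

theory Defs
  imports "HOL-Analysis.Analysis"
begin

definition outer :: "complex ^ 'd \<Rightarrow> complex ^ 'd ^ 'd" where
  "outer v = (\<chi> i j. v $ i * cnj (v $ j))"

definition qform :: "complex ^ 'd ^ 'd \<Rightarrow> complex ^ 'd \<Rightarrow> complex" where
  "qform M v = (\<Sum>i\<in>UNIV. cnj (v $ i) * (M *v v) $ i)"

text \<open>The matrix A_j after j steps of Algorithm 2, given the sequence of chosen indices.\<close>
definition alg_A :: "(nat \<Rightarrow> complex ^ 'd) \<Rightarrow> (nat \<Rightarrow> nat) \<Rightarrow> nat \<Rightarrow> complex ^ 'd ^ 'd" where
  "alg_A v sel j = (\<Sum>k<j. outer (v (sel k)))"

text \<open>sel is a valid run of Algorithm 2 on v_0..v_{m-1} (vectors indexed, so repeated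
  vectors are handled as a multiset): at step j the chosen index is among the remaining
  ones and minimises v^*(I - A_j)^{-1} v over the remaining ones (ties arbitrary).\<close>
definition greedy_run :: "nat \<Rightarrow> (nat \<Rightarrow> complex ^ 'd) \<Rightarrow> (nat \<Rightarrow> nat) \<Rightarrow> bool" where
  "greedy_run m v sel \<longleftrightarrow>
     (\<forall>j < m div 2. sel j < m \<and> sel j \<notin> sel ` {..<j} \<and>
        (\<forall>i < m. i \<notin> sel ` {..<j} \<longrightarrow>
           Re (qform (matrix_inv (mat 1 - alg_A v sel j)) (v (sel j)))
             \<le> Re (qform (matrix_inv (mat 1 - alg_A v sel j)) (v i))))"

end

theory Submission
  imports Defs
begin

text \<open>Write \<open>M\<^sub>j = I - A\<^sub>j\<close>; it is the sum of \<open>v v\<^sup>*\<close> over the \<open>m - j\<close> vectors not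
  chosen yet. By the matrix determinant lemma, removing \<open>v\<close> multiplies \<open>det M\<^sub>j\<close> by
  \<open>1 - v\<^sup>* M\<^sub>j\<^sup>-\<^sup>1 v\<close>, and summed over the remaining vectors these quadratic forms give
  \<open>trace (M\<^sub>j\<^sup>-\<^sup>1 M\<^sub>j) = d\<close>. So the greedy (minimal) choice loses at most a factor
  \<open>1 - d / (m - j)\<close>; the factor is real because \<open>M\<^sub>j\<^sub>+\<^sub>1\<close> is Hermitian. Finally
  \<open>ln (1 - x) \<ge> -x - 2 x\<^sup>2\<close> turns the sum of the logarithms of these factors into two
  telescoping sums, worth \<open>-d ln 2\<close> and \<open>-2 d\<^sup>2 / m\<close>.\<close>

lemma det_identity_row_replaced:
  fixes x :: "'a::field ^ 'n"
  shows "det (\<chi> i. if i = k then x else axis i 1) = x $ k"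
proof -
  have rows: "row i (mat 1 :: 'a^'n^'n) = axis i 1" for i
    by (simp add: row_def mat_def axis_def vec_eq_iff)
  have coords: "(\<Sum>i\<in>UNIV. x $ i *s axis i 1) = x"
    by (simp add: vec_eq_iff axis_def if_distrib cong: if_cong)
  show ?thesis
    using cramer_lemma_transpose[of k x "mat 1"] unfolding rows coords by simp
qed

lemma det_identity_plus_rank_one_row_replaced:
  fixes x :: "'a::field ^ 'n"
  assumes "finite S" "k \<notin> S"
  shows "det (\<chi> i. if i = k then x else if i \<in> S then axis i 1 + c i *s x else axis i 1) = x $ k"
  using assms
proof (induction S rule: finite_induct)
  case empty
  then show ?case
    using det_identity_row_replaced[of k x] by (simp only: empty_iff if_False)
next
  case (insert j S)
  let ?A = "\<chi> i. if i = k then x else if i \<in> S then axis i 1 + c i *s x else axis i 1"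
  have "j \<noteq> k" using insert.prems by auto
  then have "(\<chi> i. if i = k then x else if i \<in> insert j S then axis i 1 + c i *s x else axis i 1)
      = (\<chi> i. if i = j then row j ?A + c j *s row k ?A else row i ?A)"
    using insert.hyps by (simp add: vec_eq_iff row_def)
  then show ?case
    using det_row_operation[OF \<open>j \<noteq> k\<close>, of ?A "c j"] insert by simp
qed

lemma det_identity_plus_rank_one_rows:
  fixes x :: "'a::field ^ 'n"
  assumes "finite S"
  shows "det (\<chi> i. if i \<in> S then axis i 1 + c i *s x else axis i 1) = 1 + (\<Sum>i\<in>S. c i * x $ i)"
  using assms
proof (induction S rule: finite_induct)
  case empty
  have "(\<chi> i. axis i 1) = (mat 1 :: 'a^'n^'n)"
    by (simp add: vec_eq_iff mat_def axis_def)
  then show ?case by simp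
next
  case (insert k S)
  let ?R = "\<lambda>i. if i \<in> S then axis i 1 + c i *s x else axis i 1"
  have "(\<chi> i. if i \<in> insert k S then axis i 1 + c i *s x else axis i 1)
      = (\<chi> i. if i = k then axis k 1 + c k *s x else ?R i)"
    by (simp add: vec_eq_iff)
  also have "det \<dots> = det (\<chi> i. if i = k then axis k 1 else ?R i)
      + c k * det (\<chi> i. if i = k then x else ?R i)"
    by (simp add: det_row_add det_row_mul)
  also have "(\<chi> i. if i = k then axis k 1 else ?R i) = (\<chi> i. ?R i)"
    using insert.hyps by (simp add: vec_eq_iff)
  also have "det (\<chi> i. if i = k then x else ?R i) = x $ k"
    using det_identity_plus_rank_one_row_replaced[OF insert.hyps] .
  finally show ?case
    using insert by (simp add: algebra_simps)
qed

lemma det_identity_minus_rank_one: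
  fixes u w :: "'a::field ^ 'n"
  shows "det (mat 1 - (\<chi> i j. u $ i * w $ j)) = 1 - (\<Sum>i\<in>UNIV. u $ i * w $ i)"
proof -
  have "mat 1 - (\<chi> i j. u $ i * w $ j)
      = (\<chi> i. if i \<in> UNIV then axis i 1 + (- u $ i) *s w else axis i 1)"
    by (simp add: vec_eq_iff mat_def axis_def)
  then show ?thesis
    using det_identity_plus_rank_one_rows[of UNIV "\<lambda>i. - u $ i" w]
    by (simp add: sum_negf)
qed

lemma matrix_inv_right:
  assumes "invertible (A :: 'a::semiring_1 ^ 'n ^ 'n)"
  shows "A ** matrix_inv A = mat 1"
  using someI_ex[OF assms[unfolded invertible_def]] by (simp add: matrix_inv_def)

lemma matrix_inv_left:
  assumes "invertible (A :: 'a::semiring_1 ^ 'n ^ 'n)"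
  shows "matrix_inv A ** A = mat 1"
  using someI_ex[OF assms[unfolded invertible_def]] by (simp add: matrix_inv_def)

lemma det_diff_outer:
  fixes M :: "complex ^ 'n ^ 'n"
  assumes "invertible M"
  shows "det (M - outer v) = det M * (1 - qform (matrix_inv M) v)"
proof -
  define u where "u = matrix_inv M *v v"
  define w where "w = (\<chi> j. cnj (v $ j))"
  define X :: "complex ^ 'n ^ 'n" where "X = (\<chi> i j. u $ i * w $ j)"
  have "M ** X = outer v"
  proof -
    have "(M ** X) $ i $ j = (M *v u) $ i * cnj (v $ j)" for i j
      by (simp add: X_def w_def matrix_matrix_mult_def matrix_vector_mult_def
          sum_distrib_right mult.assoc)
    moreover have "M *v u = v"
      by (simp add: u_def matrix_vector_mul_assoc matrix_inv_right[OF assms])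
    ultimately show ?thesis
      by (simp add: vec_eq_iff outer_def)
  qed
  then have "M - outer v = M ** (mat 1 - X)"
    by (metis add_diff_cancel matrix_add_ldistrib matrix_mul_rid diff_add_cancel)
  then have "det (M - outer v) = det M * det (mat 1 - X)"
    by (simp add: det_mul)
  also have "det (mat 1 - X) = 1 - qform (matrix_inv M) v"
    unfolding X_def det_identity_minus_rank_one
    by (simp add: qform_def u_def w_def mult.commute)
  finally show ?thesis .
qed

lemma det_in_Reals_if_hermitian:
  fixes A :: "complex ^ 'n ^ 'n"
  assumes "\<And>i j. A $ i $ j = cnj (A $ j $ i)"
  shows "det A \<in> \<real>"
proof -
  have "cnj (det A) = det (\<chi> i j. cnj (A $ i $ j))"
    by (simp add: det_def)
  also have "(\<chi> i j. cnj (A $ i $ j)) = transpose A"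
    by (simp add: vec_eq_iff transpose_def assms[symmetric])
  finally show ?thesis
    by (simp add: Reals_cnj_iff)
qed

lemma sum_qform_eq_trace:
  fixes N :: "complex ^ 'n ^ 'n" and v :: "'i \<Rightarrow> complex ^ 'n"
  shows "(\<Sum>i\<in>R. qform N (v i)) = trace (N ** (\<Sum>i\<in>R. outer (v i)))"
proof -
  have "(\<Sum>i\<in>R. qform N (v i))
      = (\<Sum>i\<in>R. \<Sum>a\<in>UNIV. \<Sum>b\<in>UNIV. N$a$b * (v i $ b * cnj (v i $ a)))"
    by (simp add: qform_def matrix_vector_mult_def sum_distrib_left mult_ac)
  also have "\<dots> = (\<Sum>a\<in>UNIV. \<Sum>b\<in>UNIV. \<Sum>i\<in>R. N$a$b * (v i $ b * cnj (v i $ a)))"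
    by (simp add: sum.swap[of _ R] sum.swap[of _ R UNIV])
  also have "\<dots> = trace (N ** (\<Sum>i\<in>R. outer (v i)))"
    by (simp add: trace_def matrix_matrix_mult_def outer_def sum_distrib_left)
  finally show ?thesis .
qed

lemma det_diff_outer_min_qform_ge:
  fixes v :: "'i \<Rightarrow> complex ^ 'd"
  assumes "finite R" "s \<in> R"
    and M: "M = (\<Sum>i\<in>R. outer (v i))"
    and r: "det M = complex_of_real r" "r > 0"
    and min: "\<And>i. i \<in> R \<Longrightarrow>
      Re (qform (matrix_inv M) (v s)) \<le> Re (qform (matrix_inv M) (v i))"
  shows "\<exists>r'. det (M - outer (v s)) = complex_of_real r' \<and> r * (1 - CARD('d) / card R) \<le> r'"
proof -
  define q where "q = qform (matrix_inv M) (v s)"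
  have inv: "invertible M"
    using r by (simp add: invertible_det_nz)
  have det_eq: "det (M - outer (v s)) = complex_of_real r * (1 - q)"
    using det_diff_outer[OF inv] r by (simp add: q_def)
  have "det (M - outer (v s)) \<in> \<real>"
    by (rule det_in_Reals_if_hermitian) (simp add: M outer_def sum_component mult.commute)
  moreover have "q = 1 - det (M - outer (v s)) / complex_of_real r"
    using det_eq r by simp
  ultimately have "q \<in> \<real>"
    by simp
  have "real (card R) * Re q = (\<Sum>i\<in>R. Re q)"
    by simp
  also have "\<dots> \<le> (\<Sum>i\<in>R. Re (qform (matrix_inv M) (v i)))"
    using min by (intro sum_mono) (simp add: q_def)
  also have "\<dots> = Re (trace (matrix_inv M ** M))"
    using sum_qform_eq_trace[of "matrix_inv M" v R] by (simp flip: M Re_sum)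
  also have "\<dots> = CARD('d)"
    by (simp add: matrix_inv_left[OF inv] trace_I)
  finally have "real (card R) * Re q \<le> CARD('d)" .
  moreover have "card R > 0"
    using assms(1,2) card_gt_0_iff by blast
  ultimately have "Re q \<le> CARD('d) / card R"
    by (simp add: field_simps)
  then show ?thesis
    using r det_eq \<open>q \<in> \<real>\<close>
    by (intro exI[of _ "r * (1 - Re q)"]) (auto elim!: Reals_cases)
qed

lemma ln_one_minus_div_ge:
  fixes K d :: real
  assumes "K > 1" "0 \<le> d" "2 * d \<le> K"
  shows "d * (ln (K - 1) - ln K) - 2 * d\<^sup>2 * (1 / (K - 1) - 1 / K) \<le> ln (1 - d / K)"
proof -
  have "ln (K - 1) - ln K = ln ((K - 1) / K)"
    using assms(1) by (simp add: ln_div)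
  also have "(K - 1) / K = 1 - 1 / K"
    using assms(1) by (simp add: field_simps)
  also have "ln (1 - 1 / K) \<le> - (1 / K)"
    using assms(1) by (intro ln_one_minus_pos_upper_bound) auto
  finally have "d * (ln (K - 1) - ln K) \<le> d * - (1 / K)"
    using assms(2) by (rule mult_left_mono)
  then have "d * (ln (K - 1) - ln K) \<le> - (d / K)"
    by simp
  moreover have "(d / K)\<^sup>2 \<le> d\<^sup>2 * (1 / (K - 1) - 1 / K)"
  proof -
    have "1 / K\<^sup>2 \<le> 1 / (K - 1) - 1 / K"
      using assms(1) by (simp add: field_simps power2_eq_square)
    then have "d\<^sup>2 * (1 / K\<^sup>2) \<le> d\<^sup>2 * (1 / (K - 1) - 1 / K)"
      by (rule mult_left_mono) simp
    then show ?thesis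
      by (simp add: power_divide)
  qed
  moreover have "- (d / K) - 2 * (d / K)\<^sup>2 \<le> ln (1 - d / K)"
    using assms by (intro ln_one_minus_pos_lower_bound) (auto simp: field_simps)
  ultimately show ?thesis
    unfolding mult.assoc by linarith
qed

lemma sum_ln_one_minus_div_ge:
  fixes n :: nat and d :: real
  assumes "0 \<le> d" "2 * d \<le> real n"
  shows "- d * ln 2 - d\<^sup>2 / real n \<le> (\<Sum>k<n. ln (1 - d / real (2 * n - k)))"
proof (cases "n = 0")
  case True
  then show ?thesis
    using assms by simp
next
  case False
  define G where "G k = d * ln (real (2 * n - k)) - 2 * d\<^sup>2 / real (2 * n - k)" for k
  have "- d * ln 2 - d\<^sup>2 / real n = G n - G 0"
    using False by (simp add: G_def ln_mult field_simps power2_eq_square)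
  also have "\<dots> = (\<Sum>k<n. G (Suc k) - G k)"
    by (simp add: sum_lessThan_telescope)
  also have "\<dots> \<le> (\<Sum>k<n. ln (1 - d / real (2 * n - k)))"
  proof (intro sum_mono)
    fix k assume "k \<in> {..<n}"
    then have "real (2 * n - Suc k) = real (2 * n - k) - 1" "real (2 * n - k) \<ge> real n + 1"
      by auto
    then show "G (Suc k) - G k \<le> ln (1 - d / real (2 * n - k))"
      using ln_one_minus_div_ge[of "real (2 * n - k)" d] assms False
      by (simp add: G_def algebra_simps)
  qed
  finally show ?thesis .
qed

lemma greedy_run_inj_on:
  assumes "greedy_run m v sel" "j \<le> m div 2"
  shows "inj_on sel {..<j}"
  using assms(2)
proof (induction j)
  case 0
  then show ?case by simp
next
  case (Suc j)
  then show ?case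
    using assms(1) by (simp add: lessThan_Suc greedy_run_def)
qed

lemma greedy_run_remaining:
  assumes run: "greedy_run m v sel" and "(\<Sum>i<m. outer (v i)) = mat 1" "j \<le> m div 2"
  shows "(\<Sum>i\<in>{..<m} - sel ` {..<j}. outer (v i)) = mat 1 - alg_A v sel j"
    and "card ({..<m} - sel ` {..<j}) = m - j"
proof -
  have sub: "sel ` {..<j} \<subseteq> {..<m}"
    using run assms(3) by (auto simp: greedy_run_def)
  have inj: "inj_on sel {..<j}"
    using greedy_run_inj_on[OF run assms(3)] .
  have "(\<Sum>i<m. outer (v i))
      = (\<Sum>i\<in>{..<m} - sel ` {..<j}. outer (v i)) + (\<Sum>i\<in>sel ` {..<j}. outer (v i))"
    using sub by (intro sum.subset_diff) auto
  moreover have "(\<Sum>i\<in>sel ` {..<j}. outer (v i)) = alg_A v sel j"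
    by (simp add: alg_A_def sum.reindex[OF inj])
  ultimately show "(\<Sum>i\<in>{..<m} - sel ` {..<j}. outer (v i)) = mat 1 - alg_A v sel j"
    using assms(2) by (simp add: eq_diff_eq)
  show "card ({..<m} - sel ` {..<j}) = m - j"
    using sub by (simp add: card_Diff_subset card_image[OF inj])
qed

lemma greedy_run_ln_det_ge:
  fixes v :: "nat \<Rightarrow> complex ^ 'd"
  assumes run: "greedy_run m v sel" and "(\<Sum>i<m. outer (v i)) = mat 1"
    and "2 * CARD('d) \<le> m" "j \<le> m div 2"
  shows "\<exists>r > 0. det (mat 1 - alg_A v sel j) = complex_of_real r \<and>
    (\<Sum>k<j. ln (1 - CARD('d) / real (m - k))) \<le> ln r"
  using assms(4)
proof (induction j)
  case 0
  then show ?case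
    by (intro exI[of _ 1]) (simp add: alg_A_def)
next
  case (Suc j)
  then obtain r where r: "r > 0" "det (mat 1 - alg_A v sel j) = complex_of_real r"
    "(\<Sum>k<j. ln (1 - CARD('d) / real (m - k))) \<le> ln r"
    by auto
  define f where "f = 1 - CARD('d) / real (m - j)"
  have j: "j < m div 2"
    using Suc.prems by simp
  note remaining = greedy_run_remaining[OF run assms(2) less_imp_le[OF j]]
  have "\<exists>r'. det (mat 1 - alg_A v sel j - outer (v (sel j))) = complex_of_real r' \<and> r * f \<le> r'"
    using det_diff_outer_min_qform_ge[of "{..<m} - sel ` {..<j}" "sel j" _ v r]
      run j remaining r by (auto simp: greedy_run_def f_def)
  moreover have "alg_A v sel (Suc j) = alg_A v sel j + outer (v (sel j))"
    by (simp add: alg_A_def)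
  ultimately obtain r' where r': "det (mat 1 - alg_A v sel (Suc j)) = complex_of_real r'" "r * f \<le> r'"
    by (auto simp: diff_diff_eq)
  have "f > 0"
    using j assms(3) by (simp add: f_def)
  then have "0 < r * f"
    using r(1) by simp
  then have "0 < r'"
    using r'(2) by linarith
  have "ln r + ln f = ln (r * f)"
    using r(1) \<open>f > 0\<close> by (simp add: ln_mult_pos)
  also have "\<dots> \<le> ln r'"
    using \<open>0 < r * f\<close> r'(2) by simp
  finally have "ln r + ln f \<le> ln r'" .
  then show ?case
    using r' r(3) \<open>0 < r'\<close> by (intro exI[of _ r']) (simp add: f_def)
qed

theorem lemma4p1:
  fixes v :: "nat \<Rightarrow> complex ^ 'd" and m :: nat and \<alpha> :: real
    and sel :: "nat \<Rightarrow> nat"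
  assumes "even m"
    and "(\<Sum>i<m. outer (v i)) = mat 1"
    and "\<forall>i<m. (norm (v i))^2 = \<alpha>"
    and "real m \<ge> 49 * real (CARD('d))^2"
    and "greedy_run m v sel"
  shows "\<exists>r::real. det (mat 1 - alg_A v sel (m div 2)) = complex_of_real r \<and> r > 0 \<and>
           ln r \<ge> - real CARD('d) * ln 2 - 2 * real (CARD('d))^2 / real m"
proof -
  define d where "d = CARD('d)"
  define n where "n = m div 2"
  have m: "m = 2 * n"
    using assms(1) by (simp add: n_def)
  have "real d \<ge> 1"
    by (simp add: d_def)
  then have "real d \<le> real d ^ 2"
    by (simp add: power2_eq_square)
  then have "4 * real d \<le> real m"
    using \<open>real d \<ge> 1\<close> assms(4) unfolding d_def by linarith
  then have "2 * d \<le> m" "2 * real d \<le> real n"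
    using m by linarith+
  then obtain r where r: "r > 0" "det (mat 1 - alg_A v sel n) = complex_of_real r"
    "(\<Sum>k<n. ln (1 - d / real (m - k))) \<le> ln r"
    using greedy_run_ln_det_ge[OF assms(5,2)] unfolding d_def n_def by blast
  moreover have "- d * ln 2 - d\<^sup>2 / real n \<le> (\<Sum>k<n. ln (1 - d / real (m - k)))"
    using sum_ln_one_minus_div_ge[of d n] \<open>2 * real d \<le> real n\<close> m by simp
  ultimately show ?thesis
    unfolding d_def n_def using m by auto
qed

end
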